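(* Let $\mathcal I=\mathbb R^d$ with the standard inner product, let $\mathcal G$ be a compact Abelian group with normalized Haar measure $dg$, acting on $\mathcal I$ by a unitary representation $I\mapsto gI$. Let $\mathcal T=\mathcal S$ be the unit sphere of $\mathcal I$. For $I\in\mathcal I$ let $\rho_I$ be the law of the random variable $g\mapsto gI$ on $(\mathcal G,dg)$, i.e. $\rho_I(A)=\int_{\{g:\,gI\in A\}}dg$. For $t\in\mathcal T$ and a probability measure $\rho$ on $\mathcal I$, let $\rho^t$ be the probability measure on $\mathbb R$ given by $\rho^t(B)=\rho(\pi_t^{-1}(B))$, where $\pi_t(I)=\langle I,t\rangle$. Define the Tomographic Probabilistic representation $\Psi$, mapping each $I\in\mathcal I$ to the function $\mathcal T\to\mathcal P(\mathbb R)$ given by $\Psi(I)(t)=(\rho_I)^t$. Then for all $I,I'\in\mathcal I$, $$I\sim I'\iff \Psi(I)=\Psi(I').$$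
   Context: $\mathcal P(\mathbb R)$ denotes the set of Borel probability measures on $\mathbb R$. $I\sim I'$ means there exists $g\in\mathcal G$ with $gI=I'$. *)

theory Defs
  imports "HOL-Analysis.Analysis" "HOL-Probability.Probability" "HOL-Library.FuncSet"
begin

definition normalized_haar :: "('g::{topological_ab_group_add,t2_space}) measure \<Rightarrow> bool" where
  "normalized_haar \<mu> \<longleftrightarrow> prob_space \<mu> \<and> sets \<mu> = sets borel \<and>
     (\<forall>g. \<forall>A\<in>sets borel. emeasure \<mu> ((\<lambda>h. g + h) ` A) = emeasure \<mu> A)"

definition unitary_rep :: "('g::{topological_ab_group_add,t2_space} \<Rightarrow> real^'d \<Rightarrow> real^'d) \<Rightarrow> bool" where
  "unitary_rep act \<longleftrightarrow>
     (\<forall>g. orthogonal_transformation (act g)) \<and>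
     act 0 = id \<and>
     (\<forall>g h. act (g + h) = act g \<circ> act h) \<and>
     (\<forall>v. continuous_on UNIV (\<lambda>g. act g v))"

definition orbit_equiv :: "('g \<Rightarrow> real^'d \<Rightarrow> real^'d) \<Rightarrow> real^'d \<Rightarrow> real^'d \<Rightarrow> bool" where
  "orbit_equiv act I I' \<longleftrightarrow> (\<exists>g. act g I = I')"

definition orbit_law :: "'g measure \<Rightarrow> ('g \<Rightarrow> real^'d \<Rightarrow> real^'d) \<Rightarrow> real^'d \<Rightarrow> (real^'d) measure" where
  "orbit_law \<mu> act I = distr \<mu> borel (\<lambda>g. act g I)"

definition tomo_proj :: "real^'d \<Rightarrow> (real^'d) measure \<Rightarrow> real measure" where
  "tomo_proj t \<rho> = distr \<rho> borel (\<lambda>x. x \<bullet> t)"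

definition Psi :: "'g measure \<Rightarrow> ('g \<Rightarrow> real^'d \<Rightarrow> real^'d) \<Rightarrow> real^'d \<Rightarrow> real^'d \<Rightarrow> real measure" where
  "Psi \<mu> act I = (\<lambda>t\<in>sphere 0 1. tomo_proj t (orbit_law \<mu> act I))"

end

theory Submission
  imports Defs
begin

text \<open>
  Translating I by a group element only translates the Haar-distributed variable g,
  so the orbit law and hence all its projections depend only on the orbit of I.

  Conversely, put t = I'/|I'|. The variables g \<mapsto> \<langle>gI, t\<rangle> and g \<mapsto> \<langle>gI', t\<rangle> are
  continuous and equidistributed, and the Haar measure of a compact group charges every
  nonempty open set; so the maximum of the first is at least the value of the second
  at g = 0, namely |I'|. Thus \<langle>gI, I'\<rangle> \<ge> |I'|^2 for some g. By Cauchy-Schwarz and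
  symmetry |I| = |I'|, and then |gI - I'|^2 \<le> 0.
\<close>

lemma normalized_haar_space:
  assumes "normalized_haar \<mu>"
  shows "space \<mu> = UNIV" "sets \<mu> = sets borel" "prob_space \<mu>"
    and "measurable \<mu> N = measurable borel N"
  using assms unfolding normalized_haar_def
  by (auto dest: sets_eq_imp_space_eq intro: measurable_cong_sets)

lemma normalized_haar_vimage_translate:
  fixes \<mu> :: "('g::{topological_ab_group_add,t2_space}) measure"
  assumes "normalized_haar \<mu>" and "A \<in> sets borel"
  shows "emeasure \<mu> ((\<lambda>h. h + g) -` A) = emeasure \<mu> A"
proof -
  have "(\<lambda>h. h + g) -` A = (+) (- g) ` A"
    by (auto intro: image_eqI[where x = "_ + g"])
  moreover have "emeasure \<mu> ((+) (- g) ` A) = emeasure \<mu> A"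
    using assms unfolding normalized_haar_def by blast
  ultimately show ?thesis
    by simp
qed

lemma distr_normalized_haar_translate:
  fixes \<mu> :: "('g::{topological_ab_group_add,t2_space}) measure"
  assumes H: "normalized_haar \<mu>" and f: "f \<in> borel \<rightarrow>\<^sub>M M"
  shows "distr \<mu> M (\<lambda>h. f (h + g)) = distr \<mu> M f"
proof (rule measure_eqI)
  have sp: "space \<mu> = UNIV"
    using normalized_haar_space[OF H] by simp
  have "(\<lambda>h. h + g) \<in> borel_measurable borel"
    by (intro borel_measurable_continuous_onI continuous_intros)
  then have fgm: "(\<lambda>h. f (h + g)) \<in> measurable \<mu> M" and fm: "f \<in> measurable \<mu> M"
    using f measurable_compose[OF _ f] by (simp_all add: normalized_haar_space(4)[OF H])
  fix B assume "B \<in> sets (distr \<mu> M (\<lambda>h. f (h + g)))"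
  then have B: "B \<in> sets M" by simp
  have fB: "f -` B \<in> sets borel"
    using measurable_sets[OF f B] by simp
  have "emeasure (distr \<mu> M (\<lambda>h. f (h + g))) B = emeasure \<mu> ((\<lambda>h. h + g) -` (f -` B))"
    using B fgm sp by (simp add: emeasure_distr vimage_def)
  also have "\<dots> = emeasure \<mu> (f -` B)"
    by (rule normalized_haar_vimage_translate[OF H fB])
  also have "\<dots> = emeasure (distr \<mu> M f) B"
    using B fm sp by (simp add: emeasure_distr)
  finally show "emeasure (distr \<mu> M (\<lambda>h. f (h + g))) B = emeasure (distr \<mu> M f) B" .
qed simp

text \<open>Finitely many translates of U cover the compact group and all have the measure of U.\<close>

lemma normalized_haar_open_nonzero:
  fixes \<mu> :: "('g::{topological_ab_group_add,t2_space}) measure"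
  assumes cpt: "compact (UNIV :: 'g set)" and H: "normalized_haar \<mu>"
    and U: "open U" "U \<noteq> {}"
  shows "emeasure \<mu> U \<noteq> 0"
proof
  assume U0: "emeasure \<mu> U = 0"
  have sp: "space \<mu> = UNIV" and se: "sets \<mu> = sets borel" and ps: "prob_space \<mu>"
    using normalized_haar_space[OF H] by auto
  define V where "V g = (\<lambda>h. h - g) -` U" for g
  have open_V: "open (V g)" for g
    unfolding V_def using U(1) by (intro continuous_open_vimage continuous_intros) auto
  have null_V: "emeasure \<mu> (V g) = 0" for g
    using normalized_haar_vimage_translate[OF H, of U "- g"] U(1) U0 by (simp add: V_def)
  obtain u where u: "u \<in> U" using U(2) by auto
  have "x \<in> V (x - u)" for x
    using u by (simp add: V_def)
  then have "UNIV \<subseteq> (\<Union>g. V g)"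
    by blast
  then obtain F where F: "finite F" "UNIV \<subseteq> (\<Union>g\<in>F. V g)"
    by (rule compactE_image[OF cpt open_V]) blast
  then have "(\<Union>g\<in>F. V g) = space \<mu>"
    using sp by blast
  then have "1 = emeasure \<mu> (\<Union>g\<in>F. V g)"
    using prob_space.emeasure_space_1[OF ps] by simp
  also have "\<dots> \<le> (\<Sum>g\<in>F. emeasure \<mu> (V g))"
    using open_V se by (intro emeasure_subadditive_finite[OF F(1)]) auto
  also have "\<dots> = 0"
    using null_V by simp
  finally show False by simp
qed

lemma exists_ge_if_distr_eq:
  fixes \<mu> :: "'a::topological_space measure"
  assumes cpt: "compact (UNIV :: 'a set)"
    and sp: "space \<mu> = UNIV" and se: "sets \<mu> = sets borel"
    and pos: "\<And>U. open U \<Longrightarrow> U \<noteq> {} \<Longrightarrow> emeasure \<mu> U \<noteq> 0"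
    and f: "continuous_on UNIV f" and f': "continuous_on UNIV f'"
    and eq: "distr \<mu> borel f = distr \<mu> borel (f' :: 'a \<Rightarrow> real)"
  shows "\<exists>y. f' x \<le> f y"
proof -
  obtain y where y: "\<And>z. f z \<le> f y"
    using continuous_attains_sup[OF cpt _ f] by auto
  have "f' x \<le> f y + e" if e: "e > 0" for e
  proof -
    define B where "B = {f y + e <..}"
    have meas: "f \<in> measurable \<mu> borel" "f' \<in> measurable \<mu> borel"
      using f f' by (simp_all add: measurable_cong_sets[OF se refl] borel_measurable_continuous_onI)
    have "f z \<le> f y + e" for z
      using y[of z] e by simp
    then have "f -` B = {}"
      unfolding B_def by (simp add: set_eq_iff not_less)
    then have "emeasure \<mu> (f' -` B) = 0"
      using arg_cong[OF eq, of "\<lambda>M. emeasure M B"] meas sp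
      by (simp add: emeasure_distr B_def)
    moreover have "open (f' -` B)"
      unfolding B_def using f' by (simp add: continuous_on_open_vimage)
    ultimately have "f' -` B = {}"
      using pos by blast
    then show ?thesis
      unfolding B_def by (auto simp: not_less)
  qed
  then have "f' x \<le> f y"
    by (rule field_le_epsilon)
  then show ?thesis ..
qed

lemma orbit_law_act:
  fixes \<mu> :: "('g::{topological_ab_group_add,t2_space}) measure"
  assumes H: "normalized_haar \<mu>" and A: "unitary_rep act"
  shows "orbit_law \<mu> act (act g I) = orbit_law \<mu> act I"
proof -
  have "(\<lambda>h. act h I) \<in> borel_measurable borel"
    using A unfolding unitary_rep_def by (intro borel_measurable_continuous_onI) auto
  moreover have "(\<lambda>h. act h (act g I)) = (\<lambda>h. act (h + g) I)"
    using A unfolding unitary_rep_def by simp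
  ultimately show ?thesis
    unfolding orbit_law_def
    using distr_normalized_haar_translate[OF H, of "\<lambda>h. act h I" borel g] by simp
qed

lemma tomo_proj_orbit_law:
  fixes \<mu> :: "('g::{topological_ab_group_add,t2_space}) measure"
  assumes H: "normalized_haar \<mu>" and A: "unitary_rep act"
  shows "tomo_proj t (orbit_law \<mu> act I) = distr \<mu> borel (\<lambda>g. act g I \<bullet> t)"
proof -
  have "(\<lambda>g. act g I) \<in> measurable \<mu> borel"
    using A unfolding unitary_rep_def normalized_haar_space(4)[OF H]
    by (intro borel_measurable_continuous_onI) auto
  then show ?thesis
    unfolding tomo_proj_def orbit_law_def by (simp add: distr_distr comp_def)
qed

lemma Psi_eq_imp_inner_ge:
  fixes \<mu> :: "('g::{topological_ab_group_add,t2_space}) measure"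
    and act :: "'g \<Rightarrow> real^'d \<Rightarrow> real^'d"
  assumes cpt: "compact (UNIV :: 'g set)" and H: "normalized_haar \<mu>" and A: "unitary_rep act"
    and P: "Psi \<mu> act I = Psi \<mu> act I'"
  shows "\<exists>g. norm I' ^ 2 \<le> act g I \<bullet> I'"
proof (cases "I' = 0")
  case False
  define t where "t = sgn I'"
  have "t \<in> sphere 0 1"
    using False by (simp add: t_def norm_sgn)
  then have "tomo_proj t (orbit_law \<mu> act I) = tomo_proj t (orbit_law \<mu> act I')"
    using fun_cong[OF P, of t] by (simp add: Psi_def)
  then have eq: "distr \<mu> borel (\<lambda>g. act g I \<bullet> t) = distr \<mu> borel (\<lambda>g. act g I' \<bullet> t)"
    by (simp only: tomo_proj_orbit_law[OF H A])
  have cont: "continuous_on UNIV (\<lambda>g. act g J \<bullet> t)" for J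
    using A unfolding unitary_rep_def by (intro continuous_intros) auto
  obtain g where "act 0 I' \<bullet> t \<le> act g I \<bullet> t"
    using exists_ge_if_distr_eq[OF cpt normalized_haar_space(1,2)[OF H]
        normalized_haar_open_nonzero[OF cpt H] cont cont eq] by blast
  moreover have "act 0 I' \<bullet> t = norm I'"
    using A False unfolding unitary_rep_def t_def
    by (simp add: sgn_div_norm dot_square_norm power2_eq_square)
  ultimately have "norm I' * norm I' \<le> norm I' * (act g I \<bullet> t)"
    by (simp add: mult_left_mono)
  also have "\<dots> = act g I \<bullet> I'"
    using False by (simp add: t_def sgn_div_norm)
  finally show ?thesis
    by (auto simp: power2_eq_square)
qed simp

lemma norm_le_if_norm_sq_le_inner:
  fixes x y :: "'a::real_inner"
  assumes "norm y ^ 2 \<le> x \<bullet> y"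
  shows "norm y \<le> norm x"
proof (cases "y = 0")
  case False
  have "norm y * norm y \<le> norm x * norm y"
    using assms Cauchy_Schwarz_ineq2[of x y] by (simp add: power2_eq_square)
  then show ?thesis
    using False by simp
qed simp

lemma eq_if_norm_eq_norm_sq_le_inner:
  fixes x y :: "'a::real_inner"
  assumes "norm x = norm y" and "norm y ^ 2 \<le> x \<bullet> y"
  shows "x = y"
proof -
  have "norm (x - y) ^ 2 = norm x ^ 2 - 2 * (x \<bullet> y) + norm y ^ 2"
    by (simp add: power2_norm_eq_inner inner_diff inner_commute)
  also have "\<dots> \<le> 0"
    using assms by simp
  finally show ?thesis
    by simp
qed

theorem theorem3:
  fixes \<mu> :: "('g::{topological_ab_group_add,t2_space}) measure"
    and act :: "'g \<Rightarrow> real^'d \<Rightarrow> real^'d"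
  assumes "compact (UNIV :: 'g set)"
    and "normalized_haar \<mu>"
    and "unitary_rep act"
  shows "\<forall>I I'. orbit_equiv act I I' \<longleftrightarrow> Psi \<mu> act I = Psi \<mu> act I'"
proof (intro allI iffI)
  fix I I'
  assume "orbit_equiv act I I'"
  then obtain g where "act g I = I'"
    unfolding orbit_equiv_def by blast
  then have "orbit_law \<mu> act I' = orbit_law \<mu> act I"
    using orbit_law_act[OF assms(2,3), of g I] by simp
  then show "Psi \<mu> act I = Psi \<mu> act I'"
    by (simp add: Psi_def)
next
  fix I I'
  assume P: "Psi \<mu> act I = Psi \<mu> act I'"
  obtain g where g: "norm I' ^ 2 \<le> act g I \<bullet> I'"
    using Psi_eq_imp_inner_ge[OF assms P] by blast
  obtain h where h: "norm I ^ 2 \<le> act h I' \<bullet> I"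
    using Psi_eq_imp_inner_ge[OF assms P[symmetric]] by blast
  have norm_act: "norm (act k J) = norm J" for k J
    using assms(3) unfolding unitary_rep_def by (simp add: orthogonal_transformation_norm)
  have "norm (act g I) = norm I'"
    using norm_le_if_norm_sq_le_inner[OF g] norm_le_if_norm_sq_le_inner[OF h]
    by (simp add: norm_act)
  then show "orbit_equiv act I I'"
    unfolding orbit_equiv_def using eq_if_norm_eq_norm_sq_le_inner g by blast
qed

end
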